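(* Let $\mathcal{H}$ be a separable complex Hilbert space. If $N \in B(\mathcal{H})$ is a normal operator, $P \in B(\mathcal{H})$ is a rank-one orthogonal projection, and $a \in \mathbb{C}$, then $T = N + aP$ is a complex symmetric operator.
   Context: A conjugation on $\mathcal{H}$ is a conjugate-linear map $C:\mathcal{H}\to\mathcal{H}$ that is isometric and involutive ($C^2=I$). An operator $T$ is complex symmetric if $T = CT^*C$ for some conjugation $C$. *)

theory Defs
  imports "HOL-Analysis.Analysis"
begin

text \<open>The HOL distribution has no complex inner product spaces, so we introduce
  the class of complex Hilbert spaces: a real Banach space carrying a compatible
  complex scalar multiplication and a complex inner product (linear in the second
  argument, conjugate-linear in the first) inducing its norm.\<close>

class chilbert_space = real_normed_vector + complete_space +
  fixes scaleC :: "complex \<Rightarrow> 'a \<Rightarrow> 'a"  (infixr "*\<^sub>C" 75)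
    and cinner :: "'a \<Rightarrow> 'a \<Rightarrow> complex"
  assumes scaleC_add_right: "a *\<^sub>C (x + y) = a *\<^sub>C x + a *\<^sub>C y"
    and scaleC_add_left: "(a + b) *\<^sub>C x = a *\<^sub>C x + b *\<^sub>C x"
    and scaleC_scaleC: "a *\<^sub>C (b *\<^sub>C x) = (a * b) *\<^sub>C x"
    and scaleC_one: "1 *\<^sub>C x = x"
    and scaleR_scaleC: "r *\<^sub>R x = complex_of_real r *\<^sub>C x"
    and cinner_commute: "cinner x y = cnj (cinner y x)"
    and cinner_add_right: "cinner x (y + z) = cinner x y + cinner x z"
    and cinner_scaleC_right: "cinner x (a *\<^sub>C y) = a * cinner x y"
    and cinner_self_norm: "cinner x x = complex_of_real ((norm x)\<^sup>2)"

definition separable_type :: "'a::topological_space itself \<Rightarrow> bool" where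
  "separable_type _ \<longleftrightarrow> (\<exists>D::'a set. countable D \<and> closure D = UNIV)"

definition bounded_op :: "('a::chilbert_space \<Rightarrow> 'a) \<Rightarrow> bool" where
  "bounded_op T \<longleftrightarrow> bounded_linear T \<and> (\<forall>c x. T (c *\<^sub>C x) = c *\<^sub>C T x)"

definition adjoint :: "('a::chilbert_space \<Rightarrow> 'a) \<Rightarrow> ('a \<Rightarrow> 'a)" where
  "adjoint T = (THE S. \<forall>x y. cinner (T x) y = cinner x (S y))"

definition normal_op :: "('a::chilbert_space \<Rightarrow> 'a) \<Rightarrow> bool" where
  "normal_op N \<longleftrightarrow> bounded_op N \<and> N \<circ> adjoint N = adjoint N \<circ> N"

definition orth_projection :: "('a::chilbert_space \<Rightarrow> 'a) \<Rightarrow> bool" where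
  "orth_projection P \<longleftrightarrow> bounded_op P \<and> P \<circ> P = P \<and> adjoint P = P"

definition rank_one :: "('a::chilbert_space \<Rightarrow> 'a) \<Rightarrow> bool" where
  "rank_one T \<longleftrightarrow> (\<exists>v. v \<noteq> 0 \<and> range T = {c *\<^sub>C v | c. True})"

definition conjugation :: "('a::chilbert_space \<Rightarrow> 'a) \<Rightarrow> bool" where
  "conjugation C \<longleftrightarrow>
     (\<forall>x y. C (x + y) = C x + C y) \<and> (\<forall>c x. C (c *\<^sub>C x) = cnj c *\<^sub>C C x) \<and>
     (\<forall>x. norm (C x) = norm x) \<and> C \<circ> C = id"

definition complex_symmetric :: "('a::chilbert_space \<Rightarrow> 'a) \<Rightarrow> bool" where
  "complex_symmetric T \<longleftrightarrow> (\<exists>C. conjugation C \<and> T = C \<circ> adjoint T \<circ> C)"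

end

theory Submission
  imports Defs
begin

text \<open>Let \<open>S\<close> be the adjoint of the normal operator \<open>N\<close>. For every vector \<open>u\<close> there is a
  conjugation \<open>C\<close> with \<open>C u = u\<close> and \<open>C N = S C\<close>. By Zorn's lemma take a maximal partial
  conjugation fixing \<open>u\<close>: a conjugate-linear isometric involution, defined on an \<open>N\<close>- and
  \<open>S\<close>-invariant subspace, that intertwines \<open>N\<close> with \<open>S\<close>. If its domain were not dense, a nonzero
  vector \<open>w\<close> orthogonal to it would extend it by \<open>\<Sum> c N\<^sup>i S\<^sup>j w \<mapsto> \<Sum> cnj c N\<^sup>j S\<^sup>i w\<close> on the
  cyclic subspace of \<open>w\<close>; this map is well defined and isometric because \<open>N\<close> commutes with \<open>S\<close>.
  The closure of the maximal graph is then the graph of the desired conjugation.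

  Writing the projection as \<open>P x = \<langle>u, x\<rangle> u\<close> with \<open>C u = u\<close>, also \<open>C P C = P\<close>, so
  \<open>C (N + a P)\<^sup>* C = C S C + a C P C = N + a P\<close>.\<close>

lemma scaleC_zero_left [simp]: "0 *\<^sub>C x = (0::'a::chilbert_space)"
  using scaleR_scaleC [of 0 x] by simp

lemma scaleC_zero_right [simp]: "c *\<^sub>C (0::'a::chilbert_space) = 0"
  using scaleC_add_right [of c "0::'a" 0] by simp

lemma scaleC_minus_left: "(- c) *\<^sub>C x = - (c *\<^sub>C x :: 'a::chilbert_space)"
  using scaleC_add_left [of "- c" c x] by (simp add: eq_neg_iff_add_eq_0 [symmetric])

lemma scaleC_minus_right: "c *\<^sub>C (- x) = - (c *\<^sub>C x :: 'a::chilbert_space)"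
  using scaleC_add_right [of c "- x" x] by (simp add: eq_neg_iff_add_eq_0 [symmetric])

lemma scaleC_minus1_left [simp]: "(- 1) *\<^sub>C x = - (x::'a::chilbert_space)"
  by (simp add: scaleC_minus_left scaleC_one)

lemma cinner_add_left: "cinner (x + y) z = cinner x z + cinner y (z::'a::chilbert_space)"
  by (subst (1 2 3) cinner_commute) (simp add: cinner_add_right)

lemma cinner_scaleC_left: "cinner (a *\<^sub>C x) y = cnj a * cinner x (y::'a::chilbert_space)"
  by (subst (1 2) cinner_commute) (simp add: cinner_scaleC_right)

lemma cinner_zero_right [simp]: "cinner x (0::'a::chilbert_space) = 0"
  using cinner_scaleC_right [of x 0 0] by simp

lemma cinner_zero_left [simp]: "cinner (0::'a::chilbert_space) x = 0"
  using cinner_scaleC_left [of 0 0 x] by simp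

lemma cinner_minus_right: "cinner x (- y) = - cinner x (y::'a::chilbert_space)"
  using cinner_scaleC_right [of x "- 1" y] by simp

lemma cinner_minus_left: "cinner (- x) y = - cinner x (y::'a::chilbert_space)"
  using cinner_scaleC_left [of "- 1" x y] by simp

lemma cinner_diff_right: "cinner x (y - z) = cinner x y - cinner x (z::'a::chilbert_space)"
  by (simp only: diff_conv_add_uminus cinner_add_right cinner_minus_right)

lemma cinner_diff_left: "cinner (x - y) z = cinner x z - cinner y (z::'a::chilbert_space)"
  by (simp only: diff_conv_add_uminus cinner_add_left cinner_minus_left)

lemma cinner_eq_zero_iff [simp]: "cinner x x = 0 \<longleftrightarrow> x = (0::'a::chilbert_space)"
  by (simp add: cinner_self_norm)

lemma Re_cinner_self: "Re (cinner x x) = (norm (x::'a::chilbert_space))\<^sup>2"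
  by (simp add: cinner_self_norm)

lemma cinner_sum_list_right:
  "cinner x (\<Sum>a\<leftarrow>xs. f a) = (\<Sum>a\<leftarrow>xs. cinner (x::'a::chilbert_space) (f a))"
  by (induction xs) (simp_all add: cinner_add_right)

lemma cinner_ext: "(\<And>x. cinner x a = cinner x b) \<Longrightarrow> a = (b::'a::chilbert_space)"
  using cinner_diff_right [of "a - b" a b] by force

lemma norm_scaleC: "norm (c *\<^sub>C x) = cmod c * norm (x::'a::chilbert_space)"
proof -
  have "(norm (c *\<^sub>C x))\<^sup>2 = Re (c * cnj c * cinner x x)"
    by (simp only: Re_cinner_self [symmetric] cinner_scaleC_left cinner_scaleC_right mult_ac)
  also have "\<dots> = (cmod c * norm x)\<^sup>2"
    by (simp add: complex_norm_square [symmetric] cinner_self_norm power_mult_distrib)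
  finally show ?thesis
    by (simp add: power2_eq_iff_nonneg)
qed

lemma bounded_linear_scaleC: "bounded_linear (\<lambda>x::'a::chilbert_space. c *\<^sub>C x)"
proof -
  have "norm (c *\<^sub>C x) \<le> norm x * cmod c" for x :: 'a
    by (simp add: norm_scaleC)
  then show ?thesis
    by (intro bounded_linear_intro [where K = "cmod c"])
       (simp_all add: scaleC_add_right scaleR_scaleC scaleC_scaleC mult.commute)
qed

lemma power2_norm_add:
  "(norm (x + y))\<^sup>2 = (norm x)\<^sup>2 + (norm y)\<^sup>2 + 2 * Re (cinner x (y::'a::chilbert_space))"
proof -
  have "Re (cinner y x) = Re (cinner x y)"
    by (subst cinner_commute) simp
  then show ?thesis
    by (simp add: Re_cinner_self [symmetric] cinner_add_left cinner_add_right)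
qed

lemma power2_norm_diff:
  "(norm (x - y))\<^sup>2 = (norm x)\<^sup>2 + (norm y)\<^sup>2 - 2 * Re (cinner x (y::'a::chilbert_space))"
  using power2_norm_add [of x "- y"] by (simp add: cinner_minus_right)

lemma power2_norm_diff_projection:
  fixes x y :: "'a::chilbert_space"
  assumes "y \<noteq> 0"
  defines "t \<equiv> cinner y x / complex_of_real ((norm y)\<^sup>2)"
  shows "(norm (x - t *\<^sub>C y))\<^sup>2 = (norm x)\<^sup>2 - (cmod (cinner y x))\<^sup>2 / (norm y)\<^sup>2"
proof -
  define c where "c = cinner y x"
  have n: "(norm y)\<^sup>2 > 0"
    using assms(1) by simp
  have "cinner x (t *\<^sub>C y) = c * cnj c / complex_of_real ((norm y)\<^sup>2)"
    by (simp add: t_def c_def cinner_scaleC_right cinner_commute [of x y])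
  also have "\<dots> = complex_of_real ((cmod c)\<^sup>2 / (norm y)\<^sup>2)"
    by (simp only: complex_norm_square of_real_divide)
  finally have "cinner x (t *\<^sub>C y) = complex_of_real ((cmod c)\<^sup>2 / (norm y)\<^sup>2)" .
  moreover have "(cmod t * norm y)\<^sup>2 = (cmod c)\<^sup>2 / (norm y)\<^sup>2"
  proof -
    have "cmod t = cmod c / (norm y)\<^sup>2"
      by (simp add: t_def c_def norm_divide norm_power)
    then show ?thesis
      using n by (simp add: power_mult_distrib power_divide field_simps power2_eq_square)
  qed
  ultimately show ?thesis
    by (simp add: power2_norm_diff norm_scaleC c_def)
qed

lemma cinner_Cauchy_Schwarz: "cmod (cinner x y) \<le> norm x * norm (y::'a::chilbert_space)"
proof (cases "x = 0")
  case False
  have "(cmod (cinner x y))\<^sup>2 / (norm x)\<^sup>2 \<le> (norm y)\<^sup>2"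
    using power2_norm_diff_projection [OF False, of y] by (metis diff_ge_0_iff_ge zero_le_power2)
  then have "(cmod (cinner x y))\<^sup>2 \<le> (norm x * norm y)\<^sup>2"
    using False by (simp add: divide_le_eq power_mult_distrib mult.commute)
  then show ?thesis
    by (simp add: power2_le_iff_abs_le)
qed simp

lemma Re_cinner_le_norm: "Re (cinner x y) \<le> norm x * norm (y::'a::chilbert_space)"
  using complex_Re_le_cmod cinner_Cauchy_Schwarz order_trans by blast

lemma cinner_eq_zero_if_norm_le:
  fixes y z :: "'a::chilbert_space"
  assumes "\<And>t. norm z \<le> norm (z - t *\<^sub>C y)"
  shows "cinner y z = 0"
proof (cases "y = 0")
  case False
  have "(norm z)\<^sup>2 \<le> (norm z)\<^sup>2 - (cmod (cinner y z))\<^sup>2 / (norm y)\<^sup>2"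
    using power2_norm_diff_projection [OF False, of z] assms by (metis norm_ge_zero power_mono)
  then have "(cmod (cinner y z))\<^sup>2 \<le> 0"
    using False by (simp add: divide_le_0_iff)
  then show ?thesis
    by simp
qed simp

lemma Cauchy_if_power2_dist_le:
  fixes s :: "nat \<Rightarrow> 'a::metric_space"
  assumes dist: "\<And>m n. (dist (s m) (s n))\<^sup>2 \<le> b m + b n" and b: "b \<longlonglongrightarrow> 0"
  shows "Cauchy s"
proof (rule metric_CauchyI)
  fix e :: real
  assume "e > 0"
  then have "e\<^sup>2 / 2 > 0"
    by simp
  with b obtain M where M: "\<And>n. n \<ge> M \<Longrightarrow> b n < e\<^sup>2 / 2"
    by (metis (no_types, lifting) LIMSEQ_D diff_zero real_norm_def abs_less_iff)
  have "dist (s m) (s n) < e" if "m \<ge> M" "n \<ge> M" for m n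
  proof -
    have "(dist (s m) (s n))\<^sup>2 < e\<^sup>2"
      using dist [of m n] M [OF that(1)] M [OF that(2)] by linarith
    then show ?thesis
      using \<open>e > 0\<close> by (simp add: power_less_imp_less_base)
  qed
  then show "\<exists>M. \<forall>m\<ge>M. \<forall>n\<ge>M. dist (s m) (s n) < e"
    by blast
qed

definition csubspace :: "'a::chilbert_space set \<Rightarrow> bool" where
  "csubspace V \<longleftrightarrow> 0 \<in> V \<and> (\<forall>x\<in>V. \<forall>y\<in>V. x + y \<in> V) \<and> (\<forall>c. \<forall>x\<in>V. c *\<^sub>C x \<in> V)"

lemma exists_power2_dist_less_infdist:
  assumes "V \<noteq> {}" and "e > 0"
  shows "\<exists>y\<in>V. (dist x y)\<^sup>2 < (infdist x V)\<^sup>2 + e"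
proof -
  have "infdist x V < sqrt ((infdist x V)\<^sup>2 + e)"
    using infdist_nonneg [of x V] assms(2) by (simp add: real_less_rsqrt)
  then obtain y where "y \<in> V" "dist x y < sqrt ((infdist x V)\<^sup>2 + e)"
    using assms(1) by (subst (asm) infdist_notempty) (auto simp: cINF_less_iff intro: bdd_belowI2)
  moreover have "(sqrt ((infdist x V)\<^sup>2 + e))\<^sup>2 = (infdist x V)\<^sup>2 + e"
    using assms(2) by simp
  ultimately show ?thesis
    using power_strict_mono [of "dist x y" "sqrt ((infdist x V)\<^sup>2 + e)" 2] by auto
qed

text \<open>Parallelogram law for \<open>x - a\<close> and \<open>x - b\<close>, using that the midpoint of \<open>a\<close> and \<open>b\<close> lies
  in the subspace.\<close>

lemma power2_dist_le_excess:
  fixes x :: "'a::chilbert_space"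
  assumes V: "csubspace V" and "a \<in> V" "b \<in> V"
  shows "(dist a b)\<^sup>2 \<le> 2 * ((dist x a)\<^sup>2 - (infdist x V)\<^sup>2) + 2 * ((dist x b)\<^sup>2 - (infdist x V)\<^sup>2)"
proof -
  define mid where "mid = (1 / 2) *\<^sub>C (a + b)"
  have "mid + mid = a + b"
    by (simp add: mid_def scaleC_add_left [symmetric] scaleC_one)
  then have "(x - a) + (x - b) = 2 *\<^sub>R (x - mid)"
    by (simp add: scaleR_2 algebra_simps)
  moreover have "mid \<in> V"
    using V \<open>a \<in> V\<close> \<open>b \<in> V\<close> by (simp add: mid_def csubspace_def)
  then have "(infdist x V)\<^sup>2 \<le> (norm (x - mid))\<^sup>2"
    by (simp add: infdist_le infdist_nonneg power_mono flip: dist_norm)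
  ultimately have "4 * (infdist x V)\<^sup>2 \<le> (norm ((x - a) + (x - b)))\<^sup>2"
    by (simp add: power_mult_distrib)
  moreover have "(norm ((x - a) + (x - b)))\<^sup>2 + (norm (b - a))\<^sup>2
      = 2 * (norm (x - a))\<^sup>2 + 2 * (norm (x - b))\<^sup>2"
    using power2_norm_add [of "x - a" "x - b"] power2_norm_diff [of "x - a" "x - b"] by simp
  ultimately show ?thesis
    by (simp add: dist_norm norm_minus_commute)
qed

lemma exists_nonzero_orthogonal:
  fixes x :: "'a::chilbert_space"
  assumes V: "csubspace V" and x: "x \<notin> closure V"
  shows "\<exists>z. z \<noteq> 0 \<and> (\<forall>y\<in>V. cinner y z = 0)"
proof -
  define d where "d = infdist x V"
  define e where "e n = inverse (real (Suc n))" for n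
  have "V \<noteq> {}"
    using V by (auto simp: csubspace_def)
  then have "\<exists>y\<in>V. (dist x y)\<^sup>2 < d\<^sup>2 + e n" for n
    unfolding d_def e_def by (intro exists_power2_dist_less_infdist) auto
  then obtain s where s: "\<And>n. s n \<in> V" and s_dist: "\<And>n. (dist x (s n))\<^sup>2 < d\<^sup>2 + e n"
    by metis
  have "(dist (s m) (s n))\<^sup>2 \<le> 2 * e m + 2 * e n" for m n
    using power2_dist_le_excess [OF V s s, of m n x] s_dist [of m] s_dist [of n] by (simp add: d_def)
  moreover have "(\<lambda>n. 2 * e n) \<longlonglongrightarrow> 0"
    unfolding e_def using tendsto_mult_right_zero [OF LIMSEQ_inverse_real_of_nat] .
  ultimately have "Cauchy s"
    by (rule Cauchy_if_power2_dist_le)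
  then obtain m where m: "s \<longlonglongrightarrow> m"
    unfolding Cauchy_convergent_iff convergent_def by blast
  have "m \<in> closure V"
    using s m unfolding closure_sequential by blast
  then have "x - m \<noteq> 0"
    using x by auto
  moreover have "norm (x - m) \<le> norm ((x - m) - t *\<^sub>C y)" if "y \<in> V" for t y
  proof -
    have "s n + t *\<^sub>C y \<in> V" for n
      using V s that by (simp add: csubspace_def)
    then have "d\<^sup>2 \<le> (dist x (s n + t *\<^sub>C y))\<^sup>2" for n
      by (simp add: d_def infdist_le infdist_nonneg power_mono)
    then have "(dist x (s n))\<^sup>2 - e n \<le> (dist x (s n + t *\<^sub>C y))\<^sup>2" for n
      using s_dist [of n] by (smt (verit))
    moreover have "(\<lambda>n. (dist x (s n))\<^sup>2 - e n) \<longlonglongrightarrow> (norm (x - m))\<^sup>2 - 0"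
      unfolding e_def dist_norm by (intro tendsto_intros m LIMSEQ_inverse_real_of_nat)
    moreover have "(\<lambda>n. (dist x (s n + t *\<^sub>C y))\<^sup>2) \<longlonglongrightarrow> (norm ((x - m) - t *\<^sub>C y))\<^sup>2"
      unfolding dist_norm diff_diff_eq by (intro tendsto_intros m)
    ultimately have "(norm (x - m))\<^sup>2 \<le> (norm ((x - m) - t *\<^sub>C y))\<^sup>2"
      by (simp add: LIMSEQ_le)
    then show ?thesis
      by (simp add: power2_le_iff_abs_le)
  qed
  ultimately show ?thesis
    using cinner_eq_zero_if_norm_le by blast
qed

lemma Riesz_representation:
  fixes f :: "'a::chilbert_space \<Rightarrow> complex"
  assumes f: "bounded_linear f" and f_scaleC: "\<And>c x. f (c *\<^sub>C x) = c * f x"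
  shows "\<exists>y. \<forall>x. f x = cinner y x"
proof (cases "\<forall>x. f x = 0")
  case False
  define K where "K = {x. f x = 0}"
  have "csubspace K"
    using f_scaleC linear_add [OF bounded_linear.linear [OF f]] linear_0 [OF bounded_linear.linear [OF f]]
    by (auto simp: csubspace_def K_def)
  moreover have "closed K"
    unfolding K_def by (intro closed_Collect_eq continuous_on_const bounded_linear.continuous_on [OF f] continuous_on_id)
  moreover obtain x0 where "f x0 \<noteq> 0"
    using False by blast
  ultimately obtain z where "z \<noteq> 0" and z: "\<And>k. f k = 0 \<Longrightarrow> cinner k z = 0"
    using exists_nonzero_orthogonal [of K x0] by (auto simp: K_def)
  then have fz: "f z \<noteq> 0"
    by fastforce
  define n where "n = complex_of_real ((norm z)\<^sup>2)"
  have "n \<noteq> 0"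
    using \<open>z \<noteq> 0\<close> by (simp add: n_def)
  have "f x = cinner ((cnj (f z) / n) *\<^sub>C z) x" for x
  proof -
    have "f (x - (f x / f z) *\<^sub>C z) = 0"
      using fz by (simp add: linear_diff [OF bounded_linear.linear [OF f]] f_scaleC)
    then have "cinner (x - (f x / f z) *\<^sub>C z) z = 0"
      by (rule z)
    then have "cinner z x = (f x / f z) * n"
      by (subst cinner_commute) (simp add: cinner_diff_left cinner_scaleC_left n_def cinner_self_norm)
    then show ?thesis
      using fz \<open>n \<noteq> 0\<close> by (simp add: cinner_scaleC_left n_def)
  qed
  then show ?thesis
    by blast
qed (auto intro: exI [of _ 0])

lemma adjoint_eqI:
  assumes "\<And>x y. cinner (T x) y = cinner x (S y)"
  shows "adjoint T = S"
  unfolding adjoint_def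
proof (rule the_equality)
  fix S' assume "\<forall>x y. cinner (T x) y = cinner x (S' y)"
  then show "S' = S"
    using assms by (intro ext cinner_ext) metis
qed (use assms in blast)

lemma bounded_op_linear:
  assumes "bounded_op T"
  shows "T (x + y) = T x + T y" "T (x - y) = T x - T y" "T 0 = 0" "T (c *\<^sub>C x) = c *\<^sub>C T x"
  using assms unfolding bounded_op_def
  by (auto simp: linear_add linear_diff linear_0 bounded_linear.linear)

lemma adjoint_exists:
  assumes T: "bounded_op T"
  shows "\<exists>S. \<forall>x y. cinner (T x) y = cinner x (S y)"
proof -
  obtain K where K: "\<And>x. norm (T x) \<le> norm x * K"
    using T bounded_linear.bounded unfolding bounded_op_def by blast
  have "\<exists>s. \<forall>x. cinner (T x) y = cinner x s" for y
  proof -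
    have "bounded_linear (\<lambda>x. cinner y (T x))"
    proof (rule bounded_linear_intro [where K = "norm y * K"])
      show "cinner y (T (r *\<^sub>R x)) = r *\<^sub>R cinner y (T x)" for r x
        using bounded_op_linear(4) [OF T, of "complex_of_real r"]
        by (simp add: scaleR_scaleC cinner_scaleC_right scaleR_conv_of_real)
      show "norm (cinner y (T x)) \<le> norm x * (norm y * K)" for x
        using cinner_Cauchy_Schwarz [of y "T x"] mult_left_mono [OF K [of x], of "norm y"]
        by (simp add: mult_ac)
    qed (simp add: bounded_op_linear [OF T] cinner_add_right)
    moreover have "cinner y (T (c *\<^sub>C x)) = c * cinner y (T x)" for c x
      by (simp add: bounded_op_linear [OF T] cinner_scaleC_right)
    ultimately obtain s where "\<And>x. cinner y (T x) = cinner s x"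
      using Riesz_representation by blast
    then show ?thesis
      by (metis cinner_commute)
  qed
  then show ?thesis
    by metis
qed

lemma cinner_adjoint:
  assumes "bounded_op T"
  shows "cinner (T x) y = cinner x (adjoint T y)"
proof -
  obtain S where S: "\<And>x y. cinner (T x) y = cinner x (S y)"
    using adjoint_exists [OF assms] by blast
  then show ?thesis
    using adjoint_eqI [of T S] by simp
qed

lemma bounded_op_adjoint:
  assumes T: "bounded_op T"
  shows "bounded_op (adjoint T)"
proof -
  let ?S = "adjoint T"
  obtain K where "K > 0" and K: "\<And>x. norm (T x) \<le> norm x * K"
    using T bounded_linear.pos_bounded unfolding bounded_op_def by blast
  have add: "?S (x + y) = ?S x + ?S y" for x y
    by (rule cinner_ext) (simp add: cinner_adjoint [OF T, symmetric] cinner_add_right)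
  have scaleC: "?S (c *\<^sub>C x) = c *\<^sub>C ?S x" for c x
    by (rule cinner_ext) (simp add: cinner_adjoint [OF T, symmetric] cinner_scaleC_right)
  have "norm (?S y) \<le> norm y * K" for y
  proof -
    have "(norm (?S y))\<^sup>2 = Re (cinner (T (?S y)) y)"
      by (simp add: cinner_adjoint [OF T] Re_cinner_self)
    also have "\<dots> \<le> norm (?S y) * K * norm y"
      using Re_cinner_le_norm [of "T (?S y)" y] mult_right_mono [OF K [of "?S y"], of "norm y"]
      by simp
    finally show ?thesis
      using \<open>K > 0\<close> by (cases "?S y = 0") (simp_all add: power2_eq_square mult_ac)
  qed
  then have "bounded_linear ?S"
    by (intro bounded_linear_intro [where K = K]) (simp_all add: add scaleR_scaleC scaleC)
  then show ?thesis
    unfolding bounded_op_def using scaleC by blast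
qed

lemma cinner_conjugate_linear_isometry:
  assumes add: "\<And>x y. C (x + y) = C x + C y"
    and scaleC: "\<And>c x. C (c *\<^sub>C x) = cnj c *\<^sub>C C x"
    and norm: "\<And>x. norm (C x) = norm (x::'a::chilbert_space)"
  shows "cinner (C x) (C y) = cnj (cinner x y)"
proof -
  have Re: "Re (cinner (C x) (C y)) = Re (cinner x y)" for x y
    using power2_norm_add [of "C x" "C y"] power2_norm_add [of x y] by (simp add: add [symmetric] norm)
  have "Im (cinner (C x) (C y)) = - Im (cinner x y)"
    using Re [of x "\<i> *\<^sub>C y"] by (simp add: scaleC cinner_scaleC_right)
  with Re show ?thesis
    by (simp add: complex_eq_iff)
qed

lemma Pair_in_set_plus: "(x1, y1) \<in> G \<Longrightarrow> (x2, y2) \<in> H \<Longrightarrow> (x1 + x2, y1 + y2) \<in> G + H"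
  using set_plus_intro [of "(x1, y1)" G "(x2, y2)" H] by simp

lemma set_plus_Pair_elim:
  assumes "p \<in> G + H"
  obtains x1 y1 x2 y2 where "p = (x1 + x2, y1 + y2)" "(x1, y1) \<in> G" "(x2, y2) \<in> H"
proof -
  from assms obtain a b where "p = a + b" "a \<in> G" "b \<in> H"
    by (rule set_plus_elim)
  then show thesis
    using that [of "fst a" "fst b" "snd a" "snd b"] by (simp add: plus_prod_def)
qed

lemma closure_invariant:
  assumes "continuous_on UNIV f" and "\<And>p. p \<in> G \<Longrightarrow> f p \<in> G" and "p \<in> closure G"
  shows "f p \<in> closure G"
proof -
  have "f ` closure G \<subseteq> closure G"
  proof (rule image_closure_subset)
    show "continuous_on (closure G) f"
      using continuous_on_subset [OF assms(1)] by blast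
    show "f ` G \<subseteq> closure G"
      using assms(2) closure_subset by blast
  qed simp
  with assms(3) show ?thesis
    by blast
qed

lemma add_closure_closed:
  fixes G :: "'a::topological_monoid_add set"
  assumes "\<And>p q. p \<in> G \<Longrightarrow> q \<in> G \<Longrightarrow> p + q \<in> G" and "p \<in> closure G" "q \<in> closure G"
  shows "p + q \<in> closure G"
proof -
  have "(\<lambda>pq. fst pq + snd pq) ` closure (G \<times> G) \<subseteq> closure G"
  proof (rule image_closure_subset)
    show "continuous_on (closure (G \<times> G)) (\<lambda>pq. fst pq + snd pq)"
      by (intro continuous_intros)
    show "(\<lambda>pq. fst pq + snd pq) ` (G \<times> G) \<subseteq> closure G"
      using assms(1) closure_subset by fastforce
  qed simp
  then show ?thesis
    using assms(2,3) by (force simp: closure_Times)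
qed

locale normal_pair =
  fixes N S :: "'a::chilbert_space \<Rightarrow> 'a"
  assumes bounded_N: "bounded_op N" and bounded_S: "bounded_op S"
    and cinner_N: "\<And>x y. cinner (N x) y = cinner x (S y)"
    and N_S_commute: "\<And>x. N (S x) = S (N x)"
begin

lemma cinner_S: "cinner (S x) y = cinner x (N y)"
  using cinner_N [of y x] by (metis cinner_commute)

definition ns_pow :: "nat \<times> nat \<Rightarrow> 'a \<Rightarrow> 'a" where
  "ns_pow k x = (N ^^ fst k) ((S ^^ snd k) x)"

lemma ns_pow_ns_pow: "ns_pow k (ns_pow l x) = ns_pow (k + l) x"
proof -
  have "(S ^^ j) (N x) = N ((S ^^ j) x)" for j x
    by (induction j) (simp_all add: N_S_commute)
  then have "(S ^^ j) ((N ^^ i) x) = (N ^^ i) ((S ^^ j) x)" for i j x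
    by (induction i) simp_all
  then show ?thesis
    by (simp add: ns_pow_def funpow_add)
qed

lemma N_ns_pow: "N (ns_pow k x) = ns_pow (Suc (fst k), snd k) x"
  and S_ns_pow: "S (ns_pow k x) = ns_pow (fst k, Suc (snd k)) x"
  using ns_pow_ns_pow [of "(0, 1)" k x] by (simp_all add: ns_pow_def)

lemma cinner_ns_pow: "cinner (ns_pow k x) y = cinner x (ns_pow (prod.swap k) y)"
proof -
  have "cinner ((N ^^ i) x) y = cinner x ((S ^^ i) y)" for i x y
    by (induction i arbitrary: x) (simp_all add: cinner_N funpow_swap1)
  moreover have "cinner ((S ^^ i) x) y = cinner x ((N ^^ i) y)" for i x y
    by (induction i arbitrary: x) (simp_all add: cinner_S funpow_swap1)
  ultimately show ?thesis
    by (simp add: ns_pow_def)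
qed

lemma cinner_ns_pow_swap:
  "cinner (ns_pow k w) (ns_pow l w) = cinner (ns_pow (prod.swap l) w) (ns_pow (prod.swap k) w)"
  by (simp add: cinner_ns_pow ns_pow_ns_pow add.commute)

text \<open>A list of coefficients \<open>(c, (i, j))\<close> encodes the vector \<open>\<Sum> c N\<^sup>i S\<^sup>j w\<close> of the cyclic
  subspace of \<open>w\<close>; \<open>cyclic_covec\<close> is its image \<open>\<Sum> cnj c N\<^sup>j S\<^sup>i w\<close> under the conjugation
  being built.\<close>

definition cyclic_vec :: "'a \<Rightarrow> (complex \<times> nat \<times> nat) list \<Rightarrow> 'a" where
  "cyclic_vec w xs = (\<Sum>(c, k)\<leftarrow>xs. c *\<^sub>C ns_pow k w)"

definition cyclic_covec :: "'a \<Rightarrow> (complex \<times> nat \<times> nat) list \<Rightarrow> 'a" where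
  "cyclic_covec w xs = (\<Sum>(c, k)\<leftarrow>xs. cnj c *\<^sub>C ns_pow (prod.swap k) w)"

lemma cinner_cyclic_vec:
  "cinner (cyclic_vec w xs) (cyclic_vec w ys) = cinner (cyclic_covec w ys) (cyclic_covec w xs)"
proof -
  have single: "cinner (c *\<^sub>C ns_pow k w) (cyclic_vec w ys)
      = cinner (cyclic_covec w ys) (cnj c *\<^sub>C ns_pow (prod.swap k) w)" for c k
    by (induction ys)
      (simp_all add: cyclic_vec_def cyclic_covec_def split_def cinner_add_left cinner_add_right
        cinner_scaleC_left cinner_scaleC_right cinner_ns_pow_swap [of k] ring_distribs mult_ac)
  show ?thesis
  proof (induction xs)
    case (Cons a xs)
    then show ?case
      using single [of "fst a" "snd a"]
      by (simp add: cyclic_vec_def cyclic_covec_def split_def cinner_add_left cinner_add_right)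
  qed (simp add: cyclic_vec_def cyclic_covec_def)
qed

lemma norm_cyclic_covec: "norm (cyclic_covec w xs) = norm (cyclic_vec w xs)"
  using cinner_cyclic_vec [of w xs xs]
  by (simp add: cinner_self_norm power2_eq_iff_nonneg flip: of_real_power)

definition conj_graph :: "('a \<times> 'a) set \<Rightarrow> bool" where
  "conj_graph G \<longleftrightarrow>
     (\<forall>p\<in>G. \<forall>q\<in>G. p + q \<in> G) \<and> (\<forall>c x y. (x, y) \<in> G \<longrightarrow> (c *\<^sub>C x, cnj c *\<^sub>C y) \<in> G) \<and>
     (\<forall>(x, y)\<in>G. norm y = norm x \<and> (y, x) \<in> G \<and> (N x, S y) \<in> G)"

context
  fixes G assumes G: "conj_graph G"
begin

lemma conj_graph_add: "p \<in> G \<Longrightarrow> q \<in> G \<Longrightarrow> p + q \<in> G"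
  using G by (simp add: conj_graph_def)

lemma conj_graph_scaleC: "(x, y) \<in> G \<Longrightarrow> (c *\<^sub>C x, cnj c *\<^sub>C y) \<in> G"
  using G by (simp add: conj_graph_def)

lemma conj_graph_norm: "(x, y) \<in> G \<Longrightarrow> norm y = norm x"
  using G by (auto simp: conj_graph_def)

lemma conj_graph_swap: "(x, y) \<in> G \<Longrightarrow> (y, x) \<in> G"
  using G by (auto simp: conj_graph_def)

lemma conj_graph_N: "(x, y) \<in> G \<Longrightarrow> (N x, S y) \<in> G"
  using G by (auto simp: conj_graph_def)

lemma conj_graph_S: "(x, y) \<in> G \<Longrightarrow> (S x, N y) \<in> G"
  using conj_graph_swap conj_graph_N by blast

lemma conj_graph_diff: "(x, y) \<in> G \<Longrightarrow> (x', y') \<in> G \<Longrightarrow> (x - x', y - y') \<in> G"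
  using conj_graph_add [of "(x, y)" "(- x', - y')"] conj_graph_scaleC [of x' y' "- 1"] by simp

lemma conj_graph_unique: "(x, y) \<in> G \<Longrightarrow> (x, y') \<in> G \<Longrightarrow> y = y'"
  using conj_graph_norm [OF conj_graph_diff, of x y x y'] by simp

lemma conj_graph_zero: "(x, y) \<in> G \<Longrightarrow> (0, 0) \<in> G"
  using conj_graph_scaleC [of x y 0] by simp

lemma csubspace_fst_conj_graph: "G \<noteq> {} \<Longrightarrow> csubspace (fst ` G)"
proof -
  have "fst p + fst q \<in> fst ` G" if "p \<in> G" "q \<in> G" for p q
    using conj_graph_add [OF that] by force
  moreover have "c *\<^sub>C fst p \<in> fst ` G" if "p \<in> G" for c p
    using conj_graph_scaleC [of "fst p" "snd p" c] that by force
  moreover assume "G \<noteq> {}"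
  then have "0 \<in> fst ` G"
    using conj_graph_zero by force
  ultimately show ?thesis
    unfolding csubspace_def by blast
qed

lemma ns_pow_fst_conj_graph:
  assumes "x \<in> fst ` G"
  shows "ns_pow k x \<in> fst ` G"
proof -
  have pow: "(T ^^ n) x \<in> fst ` G" if "x \<in> fst ` G" "\<And>x. x \<in> fst ` G \<Longrightarrow> T x \<in> fst ` G"
    for T n x
    using that by (induction n) auto
  have "N x \<in> fst ` G" "S x \<in> fst ` G" if "x \<in> fst ` G" for x
    using that conj_graph_N conj_graph_S by force+
  then show ?thesis
    using pow [OF pow [OF assms]] by (simp add: ns_pow_def)
qed

end

definition cyclic_graph :: "'a \<Rightarrow> ('a \<times> 'a) set" where
  "cyclic_graph w = range (\<lambda>xs. (cyclic_vec w xs, cyclic_covec w xs))"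

lemma cyclic_graph_self: "(w, w) \<in> cyclic_graph w"
  unfolding cyclic_graph_def
  by (rule range_eqI [where x = "[(1, 0, 0)]"])
    (simp add: cyclic_vec_def cyclic_covec_def ns_pow_def scaleC_one)

lemma cyclic_vec_append: "cyclic_vec w (xs @ ys) = cyclic_vec w xs + cyclic_vec w ys"
  and cyclic_covec_append: "cyclic_covec w (xs @ ys) = cyclic_covec w xs + cyclic_covec w ys"
  by (simp_all add: cyclic_vec_def cyclic_covec_def)

lemma cyclic_vec_scaleC: "cyclic_vec w (map (\<lambda>(d, k). (c * d, k)) xs) = c *\<^sub>C cyclic_vec w xs"
  and cyclic_covec_scaleC:
    "cyclic_covec w (map (\<lambda>(d, k). (c * d, k)) xs) = cnj c *\<^sub>C cyclic_covec w xs"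
  by (induction xs)
    (simp_all add: cyclic_vec_def cyclic_covec_def split_def scaleC_add_right scaleC_scaleC)

lemma cyclic_vec_conj: "cyclic_vec w (map (\<lambda>(c, k). (cnj c, prod.swap k)) xs) = cyclic_covec w xs"
  and cyclic_covec_conj: "cyclic_covec w (map (\<lambda>(c, k). (cnj c, prod.swap k)) xs) = cyclic_vec w xs"
  by (simp_all add: cyclic_vec_def cyclic_covec_def split_def comp_def)

lemma cyclic_vec_N: "cyclic_vec w (map (\<lambda>(c, i, j). (c, Suc i, j)) xs) = N (cyclic_vec w xs)"
  and cyclic_covec_N: "cyclic_covec w (map (\<lambda>(c, i, j). (c, Suc i, j)) xs) = S (cyclic_covec w xs)"
  by (induction xs)
    (simp_all add: cyclic_vec_def cyclic_covec_def split_def bounded_op_linear bounded_N bounded_S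
      N_ns_pow S_ns_pow)

lemma conj_graph_cyclic_graph: "conj_graph (cyclic_graph w)"
proof -
  let ?f = "\<lambda>xs. (cyclic_vec w xs, cyclic_covec w xs)"
  have "?f xs + ?f ys \<in> range ?f" for xs ys
    by (rule range_eqI [where x = "xs @ ys"]) (simp add: cyclic_vec_append cyclic_covec_append)
  moreover have "(c *\<^sub>C cyclic_vec w xs, cnj c *\<^sub>C cyclic_covec w xs) \<in> range ?f" for c xs
    by (rule range_eqI [where x = "map (\<lambda>(d, k). (c * d, k)) xs"])
      (simp add: cyclic_vec_scaleC cyclic_covec_scaleC)
  moreover have "(cyclic_covec w xs, cyclic_vec w xs) \<in> range ?f" for xs
    by (rule range_eqI [where x = "map (\<lambda>(c, k). (cnj c, prod.swap k)) xs"])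
      (simp add: cyclic_vec_conj cyclic_covec_conj)
  moreover have "(N (cyclic_vec w xs), S (cyclic_covec w xs)) \<in> range ?f" for xs
    by (rule range_eqI [where x = "map (\<lambda>(c, i, j). (c, Suc i, j)) xs"])
      (simp add: cyclic_vec_N cyclic_covec_N)
  ultimately show ?thesis
    unfolding conj_graph_def cyclic_graph_def by (auto simp: norm_cyclic_covec)
qed

lemma conj_graph_Union:
  assumes chain: "subset.chain A C" and graphs: "\<And>G. G \<in> C \<Longrightarrow> conj_graph G"
  shows "conj_graph (\<Union>C)"
  unfolding conj_graph_def
proof (intro conjI ballI allI impI)
  fix p q
  assume "p \<in> \<Union>C" "q \<in> \<Union>C"
  then obtain G where "G \<in> C" "p \<in> G" "q \<in> G"
    using chain unfolding subset_chain_def by blast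
  then show "p + q \<in> \<Union>C"
    using conj_graph_add [OF graphs] by blast
next
  fix c x y
  assume "(x, y) \<in> \<Union>C"
  then obtain G where "G \<in> C" "(x, y) \<in> G"
    by blast
  then show "(c *\<^sub>C x, cnj c *\<^sub>C y) \<in> \<Union>C"
    using conj_graph_scaleC [OF graphs] by blast
next
  fix p
  assume "p \<in> \<Union>C"
  then obtain G where "G \<in> C" "p \<in> G"
    by blast
  then show "case p of (x, y) \<Rightarrow> norm y = norm x \<and> (y, x) \<in> \<Union>C \<and> (N x, S y) \<in> \<Union>C"
    using conj_graph_norm [OF graphs] conj_graph_swap [OF graphs] conj_graph_N [OF graphs]
    by (cases p) blast
qed

lemma conj_graph_plus:
  assumes G: "conj_graph G" and H: "conj_graph H"
    and orth: "\<And>x y. x \<in> fst ` G \<Longrightarrow> y \<in> fst ` H \<Longrightarrow> cinner x y = 0"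
  shows "conj_graph (G + H)"
  unfolding conj_graph_def
proof (intro conjI ballI allI impI)
  fix p q
  assume "p \<in> G + H" "q \<in> G + H"
  then obtain p1 p2 q1 q2 where "p = p1 + p2" "q = q1 + q2" "p1 \<in> G" "q1 \<in> G" "p2 \<in> H" "q2 \<in> H"
    by (elim set_plus_elim)
  then have "(p1 + q1) + (p2 + q2) \<in> G + H"
    using conj_graph_add [OF G] conj_graph_add [OF H] by blast
  then show "p + q \<in> G + H"
    by (simp add: \<open>p = p1 + p2\<close> \<open>q = q1 + q2\<close> add_ac)
next
  fix c x y
  assume "(x, y) \<in> G + H"
  then obtain x1 y1 x2 y2 where "x = x1 + x2" "y = y1 + y2" "(x1, y1) \<in> G" "(x2, y2) \<in> H"
    by (elim set_plus_Pair_elim) simp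
  then show "(c *\<^sub>C x, cnj c *\<^sub>C y) \<in> G + H"
    using Pair_in_set_plus [OF conj_graph_scaleC [OF G] conj_graph_scaleC [OF H]]
    by (simp add: scaleC_add_right)
next
  fix p
  assume "p \<in> G + H"
  then obtain x1 y1 x2 y2 where p: "p = (x1 + x2, y1 + y2)" and xy1: "(x1, y1) \<in> G"
    and xy2: "(x2, y2) \<in> H"
    by (rule set_plus_Pair_elim)
  have "cinner x1 x2 = 0" "cinner y1 y2 = 0"
    using orth conj_graph_swap [OF G xy1] conj_graph_swap [OF H xy2] xy1 xy2 by force+
  then have "(norm (y1 + y2))\<^sup>2 = (norm (x1 + x2))\<^sup>2"
    by (simp add: power2_norm_add conj_graph_norm [OF G xy1] conj_graph_norm [OF H xy2])
  moreover have "(y1 + y2, x1 + x2) \<in> G + H"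
    using Pair_in_set_plus [OF conj_graph_swap [OF G xy1] conj_graph_swap [OF H xy2]] .
  moreover have "(N (x1 + x2), S (y1 + y2)) \<in> G + H"
    using Pair_in_set_plus [OF conj_graph_N [OF G xy1] conj_graph_N [OF H xy2]]
    by (simp add: bounded_op_linear bounded_N bounded_S)
  ultimately show "case p of (x, y) \<Rightarrow> norm y = norm x \<and> (y, x) \<in> G + H \<and> (N x, S y) \<in> G + H"
    by (simp add: p power2_eq_iff_nonneg)
qed

lemma cinner_fst_cyclic_graph:
  assumes "conj_graph G" "x \<in> fst ` G" "\<And>v. v \<in> fst ` G \<Longrightarrow> cinner v w = 0"
    and "y \<in> fst ` cyclic_graph w"
  shows "cinner x y = 0"
proof -
  have "cinner x (ns_pow k w) = 0" for k
    using cinner_ns_pow [of "prod.swap k" x w] assms(3) [OF ns_pow_fst_conj_graph [OF assms(1,2)]]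
    by simp
  moreover obtain xs where "y = cyclic_vec w xs"
    using assms(4) by (auto simp: cyclic_graph_def)
  ultimately show ?thesis
    by (simp add: cyclic_vec_def cinner_sum_list_right split_def cinner_scaleC_right)
qed

lemma exists_conj_graph_dense:
  "\<exists>G. conj_graph G \<and> (u, u) \<in> G \<and> closure (fst ` G) = UNIV"
proof -
  define A where "A = {G. conj_graph G \<and> (u, u) \<in> G}"
  have "cyclic_graph u \<in> A"
    by (simp add: A_def conj_graph_cyclic_graph cyclic_graph_self)
  moreover have "\<Union>C \<in> A" if "C \<noteq> {}" "subset.chain A C" for C
    using that conj_graph_Union [OF that(2)] unfolding A_def subset_chain_def by blast
  ultimately obtain M where "M \<in> A" and max: "\<And>G. G \<in> A \<Longrightarrow> M \<subseteq> G \<Longrightarrow> G = M"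
    using subset_Zorn_nonempty [of A] by blast
  then have M: "conj_graph M" "(u, u) \<in> M"
    by (auto simp: A_def)
  have "closure (fst ` M) = UNIV"
  proof (rule ccontr)
    assume "closure (fst ` M) \<noteq> UNIV"
    then obtain x where "x \<notin> closure (fst ` M)"
      by blast
    then obtain w where "w \<noteq> 0" and w: "\<And>v. v \<in> fst ` M \<Longrightarrow> cinner v w = 0"
      using exists_nonzero_orthogonal csubspace_fst_conj_graph [OF M(1)] M(2) by blast
    define M' where "M' = M + cyclic_graph w"
    have "conj_graph M'"
      unfolding M'_def using M(1) conj_graph_cyclic_graph
      by (rule conj_graph_plus) (rule cinner_fst_cyclic_graph [OF M(1) _ w])
    moreover have "(0, 0) \<in> cyclic_graph w" "(0, 0) \<in> M"
      using conj_graph_zero [OF conj_graph_cyclic_graph cyclic_graph_self] conj_graph_zero [OF M] by auto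
    then have "M \<subseteq> M'" "(w, w) \<in> M'"
      using Pair_in_set_plus [of _ _ M 0 0 "cyclic_graph w"] Pair_in_set_plus [of 0 0 M w w]
        cyclic_graph_self by (auto simp: M'_def)
    ultimately have "M' = M"
      using max M(2) by (auto simp: A_def)
    then have "cinner w w = 0"
      using w \<open>(w, w) \<in> M'\<close> by force
    with \<open>w \<noteq> 0\<close> show False
      by simp
  qed
  with M show ?thesis
    by blast
qed

lemma conj_graph_closure:
  assumes G: "conj_graph G"
  shows "conj_graph (closure G)"
proof -
  have continuous: "continuous_on UNIV (\<lambda>p. (T (fst p), T' (snd p)))"
    if "bounded_linear T" "bounded_linear T'" for T T' :: "'a \<Rightarrow> 'a"
    using bounded_linear.continuous_on [OF that(1) continuous_on_fst [OF continuous_on_id]]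
      bounded_linear.continuous_on [OF that(2) continuous_on_snd [OF continuous_on_id]]
    by (rule continuous_on_Pair)
  have add: "p + q \<in> closure G" if "p \<in> closure G" "q \<in> closure G" for p q
    by (rule add_closure_closed [OF conj_graph_add [OF G] that])
  have scaleC: "(c *\<^sub>C fst p, cnj c *\<^sub>C snd p) \<in> closure G" if "p \<in> closure G" for c p
  proof (rule closure_invariant [OF continuous [OF bounded_linear_scaleC bounded_linear_scaleC] _ that])
    show "(c *\<^sub>C fst q, cnj c *\<^sub>C snd q) \<in> G" if "q \<in> G" for q
      using conj_graph_scaleC [OF G, of "fst q" "snd q" c] that by simp
  qed
  have swap: "prod.swap p \<in> closure G" if "p \<in> closure G" for p
  proof (rule closure_invariant [OF continuous_on_swap _ that])
    show "prod.swap q \<in> G" if "q \<in> G" for q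
      using conj_graph_swap [OF G, of "fst q" "snd q"] that by (cases q) simp
  qed
  have N: "(N (fst p), S (snd p)) \<in> closure G" if "p \<in> closure G" for p
  proof (rule closure_invariant [OF continuous _ that])
    show "bounded_linear N" "bounded_linear S"
      using bounded_N bounded_S by (simp_all add: bounded_op_def)
    show "(N (fst q), S (snd q)) \<in> G" if "q \<in> G" for q
      using conj_graph_N [OF G, of "fst q" "snd q"] that by simp
  qed
  have norm: "closure G \<subseteq> {p. norm (snd p) = norm (fst p)}"
  proof (rule closure_minimal)
    show "G \<subseteq> {p. norm (snd p) = norm (fst p)}"
      using conj_graph_norm [OF G] by auto
    show "closed {p :: 'a \<times> 'a. norm (snd p) = norm (fst p)}"
      by (intro closed_Collect_eq continuous_intros)
  qed
  show ?thesis
    unfolding conj_graph_def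
  proof (intro conjI ballI allI impI)
    fix c x y
    assume "(x, y) \<in> closure G"
    then show "(c *\<^sub>C x, cnj c *\<^sub>C y) \<in> closure G"
      using scaleC by fastforce
  next
    fix p
    assume "p \<in> closure G"
    then show "case p of (x, y) \<Rightarrow> norm y = norm x \<and> (y, x) \<in> closure G \<and> (N x, S y) \<in> closure G"
      using swap [of p] N [of p] norm by (cases p) auto
  qed (fact add)
qed

lemma fst_closure_conj_graph:
  assumes G: "conj_graph G" and dense: "closure (fst ` G) = UNIV"
  shows "fst ` closure G = UNIV"
proof -
  have "x \<in> fst ` closure G" for x
  proof -
    obtain s where s: "\<And>n. s n \<in> fst ` G" and "s \<longlonglongrightarrow> x"
      using dense closure_sequential [of x "fst ` G"] by blast
    have "\<exists>y. (s n, y) \<in> G" for n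
      using s [of n] by force
    then obtain t where st: "\<And>n. (s n, t n) \<in> G"
      by metis
    have "dist (t m) (t n) = dist (s m) (s n)" for m n
      using conj_graph_norm [OF G conj_graph_diff [OF G st st]] by (simp add: dist_norm)
    moreover have "Cauchy s"
      using \<open>s \<longlonglongrightarrow> x\<close> by (rule LIMSEQ_imp_Cauchy)
    ultimately have "Cauchy t"
      unfolding Cauchy_def by simp
    then obtain y where "t \<longlonglongrightarrow> y"
      unfolding Cauchy_convergent_iff convergent_def by blast
    with \<open>s \<longlonglongrightarrow> x\<close> have "(\<lambda>n. (s n, t n)) \<longlonglongrightarrow> (x, y)"
      by (rule tendsto_Pair)
    then have "(x, y) \<in> closure G"
      unfolding closure_sequential using st by (intro exI [of _ "\<lambda>n. (s n, t n)"]) simp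
    then show ?thesis
      by force
  qed
  then show ?thesis
    by blast
qed

lemma conjugation_of_conj_graph:
  assumes G: "conj_graph G" and total: "fst ` G = UNIV"
  obtains C where "conjugation C" "\<And>x. (x, C x) \<in> G" "\<And>x. C (N x) = S (C x)"
proof -
  have "\<exists>y. (x, y) \<in> G" for x
    using total by force
  then obtain C where C: "\<And>x. (x, C x) \<in> G"
    by metis
  have eq: "C x = y" if "(x, y) \<in> G" for x y
    using conj_graph_unique [OF G C that] .
  have "conjugation C"
    unfolding conjugation_def
  proof (intro conjI allI ext)
    show "C (x + y) = C x + C y" for x y
      using conj_graph_add [OF G C C] by (simp add: eq)
    show "C (c *\<^sub>C x) = cnj c *\<^sub>C C x" for c x
      using conj_graph_scaleC [OF G C] by (rule eq)
    show "norm (C x) = norm x" for x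
      using conj_graph_norm [OF G C] .
    show "(C \<circ> C) x = id x" for x
      using conj_graph_swap [OF G C] by (simp add: eq)
  qed
  moreover have "C (N x) = S (C x)" for x
    using conj_graph_N [OF G C] by (rule eq)
  ultimately show thesis
    using that C by blast
qed

theorem exists_conjugation_intertwining:
  obtains C where "conjugation C" "C u = u" "\<And>x. C (N x) = S (C x)"
proof -
  obtain G where G: "conj_graph G" "(u, u) \<in> G" "closure (fst ` G) = UNIV"
    using exists_conj_graph_dense by blast
  obtain C where C: "conjugation C" "\<And>x. (x, C x) \<in> closure G" "\<And>x. C (N x) = S (C x)"
    by (rule conjugation_of_conj_graph [OF conj_graph_closure [OF G(1)] fst_closure_conj_graph [OF G(1,3)]])
      blast
  have "(u, u) \<in> closure G"
    using G(2) closure_subset by blast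
  then have "C u = u"
    by (rule conj_graph_unique [OF conj_graph_closure [OF G(1)] C(2)])
  with C show thesis
    using that by blast
qed

end

lemma rank_one_projection_eq:
  assumes "orth_projection P" and "rank_one P"
  obtains u where "\<And>x. P x = cinner u x *\<^sub>C u"
proof -
  have P: "bounded_op P" "\<And>x. P (P x) = P x" "\<And>x y. cinner (P x) y = cinner x (P y)"
    using assms(1) cinner_adjoint [of P] unfolding orth_projection_def by (auto simp: fun_eq_iff)
  obtain v where "v \<noteq> 0" and range: "range P = {c *\<^sub>C v | c. True}"
    using assms(2) unfolding rank_one_def by blast
  define u where "u = complex_of_real (1 / norm v) *\<^sub>C v"
  have "norm u = 1"
    using \<open>v \<noteq> 0\<close> by (simp add: u_def norm_scaleC norm_divide)
  then have "cinner u u = 1"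
    by (simp add: cinner_self_norm)
  have "u \<in> range P"
    unfolding range u_def by blast
  then have "P u = u"
    using P(2) by auto
  have "P x = cinner u x *\<^sub>C u" for x
  proof -
    have "P x \<in> range P"
      by simp
    then obtain c where "P x = c *\<^sub>C v"
      unfolding range by blast
    then have Px: "P x = (c * norm v) *\<^sub>C u"
      using \<open>v \<noteq> 0\<close> by (simp add: u_def scaleC_scaleC)
    have "cinner u x = cinner u (P x)"
      using P(3) [of u x] \<open>P u = u\<close> by simp
    also have "\<dots> = c * norm v"
      by (simp add: Px cinner_scaleC_right \<open>cinner u u = 1\<close>)
    finally show ?thesis
      by (simp add: Px)
  qed
  then show thesis
    using that by blast
qed

theorem corollary4p6:
  fixes N P :: "'a::chilbert_space \<Rightarrow> 'a" and a :: complex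
  assumes "separable_type TYPE('a)"
    and "normal_op N"
    and "orth_projection P" and "rank_one P"
  shows "complex_symmetric (\<lambda>x. N x + a *\<^sub>C P x)"
proof -
  have N: "bounded_op N" and "\<And>x. N (adjoint N x) = adjoint N (N x)"
    using assms(2) unfolding normal_op_def by (auto simp: fun_eq_iff)
  then interpret normal_pair N "adjoint N"
    by unfold_locales (simp_all add: bounded_op_adjoint cinner_adjoint)
  obtain u where P: "\<And>x. P x = cinner u x *\<^sub>C u"
    using rank_one_projection_eq [OF assms(3,4)] by blast
  obtain C where C: "conjugation C" "C u = u" "\<And>x. C (N x) = adjoint N (C x)"
    using exists_conjugation_intertwining by blast
  have C_add: "\<And>x y. C (x + y) = C x + C y" and C_scaleC: "\<And>c x. C (c *\<^sub>C x) = cnj c *\<^sub>C C x"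
    and C_norm: "\<And>x. norm (C x) = norm x" and C_C: "\<And>x. C (C x) = x"
    using C(1) unfolding conjugation_def by (auto simp: fun_eq_iff)
  have "adjoint (\<lambda>x. N x + a *\<^sub>C P x) = (\<lambda>y. adjoint N y + cnj a *\<^sub>C P y)"
    by (rule adjoint_eqI) (simp add: P cinner_add_left cinner_add_right cinner_scaleC_left
        cinner_scaleC_right cinner_adjoint [OF N] cinner_commute [of u] algebra_simps)
  moreover have "C (adjoint N (C x)) = N x" for x
    by (simp add: C(3) [symmetric] C_C)
  moreover have "C (P (C x)) = P x" for x
    using cinner_conjugate_linear_isometry [OF C_add C_scaleC C_norm, of u x]
    by (simp add: P C_scaleC C(2))
  ultimately have "(\<lambda>x. N x + a *\<^sub>C P x) = C \<circ> adjoint (\<lambda>x. N x + a *\<^sub>C P x) \<circ> C"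
    by (simp add: fun_eq_iff C_add C_scaleC)
  with C(1) show ?thesis
    unfolding complex_symmetric_def by blast
qed

end
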